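(* Let $G$ be a finite, connected, undirected, unweighted graph without self-loops on $N=N_{\mathrm{G}}+N_{\mathrm{R}}$ vertices, properly two-colored with $N_{\mathrm{G}}$ green and $N_{\mathrm{R}}$ red vertices. Suppose every green vertex has degree $k_{\mathrm{G}}$ and every red vertex has degree $k_{\mathrm{R}}$. Let $a_{\mathrm{G}},a_{\mathrm{R}},b_{\mathrm{G}},b_{\mathrm{R}}>0$ with $a_{\mathrm{G}}a_{\mathrm{R}}\neq b_{\mathrm{G}}b_{\mathrm{R}}$. Define $$\zeta_{\mathrm{G}}=\frac{b_{\mathrm{R}}(a_{\mathrm{R}}k_{\mathrm{G}}+b_{\mathrm{G}}k_{\mathrm{R}})}{a_{\mathrm{R}}(a_{\mathrm{G}}k_{\mathrm{R}}+b_{\mathrm{R}}k_{\mathrm{G}})},\qquad \zeta_{\mathrm{R}}=\frac{b_{\mathrm{G}}(a_{\mathrm{G}}k_{\mathrm{R}}+b_{\mathrm{R}}k_{\mathrm{G}})}{a_{\mathrm{G}}(a_{\mathrm{R}}k_{\mathrm{G}}+b_{\mathrm{G}}k_{\mathrm{R}})}.$$ Then in the colored Moran process on $G$, the mean fixation probability of a single $A$ placed at a uniformly random vertex in a population otherwise of type $B$ is $$\rho_A=\frac{1-\frac{1}{N}\left(N_{\mathrm{G}}\zeta_{\mathrm{G}}+N_{\mathrm{R}}\zeta_{\mathrm{R}}\right)}{1-\zeta_{\mathrm{G}}^{N_{\mathrm{G}}}\zeta_{\mathrm{R}}^{N_{\mathrm{R}}}}.$$ Likewise, the mean fixation probability $\rho_B$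 of a single $B$ placed at a uniformly random vertex in a population otherwise of type $A$ is given by the same formula with the roles of $a$ and $b$ interchanged, i.e. $$\rho_B=\frac{1-\frac{1}{N}\left(N_{\mathrm{G}}\eta_{\mathrm{G}}+N_{\mathrm{R}}\eta_{\mathrm{R}}\right)}{1-\eta_{\mathrm{G}}^{N_{\mathrm{G}}}\eta_{\mathrm{R}}^{N_{\mathrm{R}}}},\quad \eta_{\mathrm{G}}=\frac{a_{\mathrm{R}}(b_{\mathrm{R}}k_{\mathrm{G}}+a_{\mathrm{G}}k_{\mathrm{R}})}{b_{\mathrm{R}}(b_{\mathrm{G}}k_{\mathrm{R}}+a_{\mathrm{R}}k_{\mathrm{G}})},\ \eta_{\mathrm{R}}=\frac{a_{\mathrm{G}}(b_{\mathrm{G}}k_{\mathrm{R}}+a_{\mathrm{R}}k_{\mathrm{G}})}{b_{\mathrm{G}}(b_{\mathrm{R}}k_{\mathrm{G}}+a_{\mathrm{G}}k_{\mathrm{R}})}.$$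
   Context: A proper two-coloring assigns each vertex one of two colors, green or red, so that no two adjacent vertices have the same color. Each vertex is occupied by one individual of type $A$ (mutant) or $B$ (resident). The fitness of an individual depends on its type and the color of its vertex: type $A$ has fitness $a_{\mathrm{G}}$ on green and $a_{\mathrm{R}}$ on red vertices; type $B$ has fitness $b_{\mathrm{G}}$ on green and $b_{\mathrm{R}}$ on red vertices. Colors are fixed over time. Colored Moran (birth-death) process: in each time step, one individual is chosen to reproduce with probability proportional to its fitness (relative to the total fitness of the population); its offspring (of the same type) replaces the occupant of a neighbor chosen uniformly at random among the parent's neighbors. The fixation probability of $A$ is the probability that the process is absorbed in the all-$A$ state. *)

theory Defs
  imports Complex_Main
begin

(* A state of the colored Moran process is the set S \<subseteq> V of vertices occupied by type A. *)

definition nbrs :: "'v set \<Rightarrow> ('v \<Rightarrow> 'v \<Rightarrow> bool) \<Rightarrow> 'v \<Rightarrow> 'v set" where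
  "nbrs V E u = {v \<in> V. E u v}"

definition fitness :: "('v \<Rightarrow> bool) \<Rightarrow> real \<Rightarrow> real \<Rightarrow> real \<Rightarrow> real \<Rightarrow> 'v set \<Rightarrow> 'v \<Rightarrow> real" where
  "fitness green aG aR bG bR S u =
     (if u \<in> S then (if green u then aG else aR) else (if green u then bG else bR))"

definition total_fitness :: "'v set \<Rightarrow> ('v \<Rightarrow> bool) \<Rightarrow> real \<Rightarrow> real \<Rightarrow> real \<Rightarrow> real \<Rightarrow> 'v set \<Rightarrow> real" where
  "total_fitness V green aG aR bG bR S = (\<Sum>w\<in>V. fitness green aG aR bG bR S w)"

(* state after u reproduces and its offspring replaces the occupant of v *)
definition moran_update :: "'v set \<Rightarrow> 'v \<Rightarrow> 'v \<Rightarrow> 'v set" where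
  "moran_update S u v = (if u \<in> S then insert v S else S - {v})"

(* absorbed_by V E green aG aR bG bR T n S = probability that the colored Moran process started
   in state S is in the (absorbing) state T at time n, i.e. has been absorbed in T by time n. *)
fun absorbed_by :: "'v set \<Rightarrow> ('v \<Rightarrow> 'v \<Rightarrow> bool) \<Rightarrow> ('v \<Rightarrow> bool) \<Rightarrow> real \<Rightarrow> real \<Rightarrow> real \<Rightarrow> real
    \<Rightarrow> 'v set \<Rightarrow> nat \<Rightarrow> 'v set \<Rightarrow> real" where
  "absorbed_by V E green aG aR bG bR T 0 S = (if S = T then 1 else 0)"
| "absorbed_by V E green aG aR bG bR T (Suc n) S =
     (if S = T then 1 else
      (\<Sum>u\<in>V. \<Sum>v\<in>nbrs V E u.
          fitness green aG aR bG bR S u / total_fitness V green aG aR bG bR S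
          * (1 / real (card (nbrs V E u)))
          * absorbed_by V E green aG aR bG bR T n (moran_update S u v)))"

definition absorption_prob :: "'v set \<Rightarrow> ('v \<Rightarrow> 'v \<Rightarrow> bool) \<Rightarrow> ('v \<Rightarrow> bool) \<Rightarrow> real \<Rightarrow> real \<Rightarrow> real \<Rightarrow> real
    \<Rightarrow> 'v set \<Rightarrow> 'v set \<Rightarrow> real" where
  "absorption_prob V E green aG aR bG bR T S = lim (\<lambda>n. absorbed_by V E green aG aR bG bR T n S)"

definition rho_A :: "'v set \<Rightarrow> ('v \<Rightarrow> 'v \<Rightarrow> bool) \<Rightarrow> ('v \<Rightarrow> bool) \<Rightarrow> real \<Rightarrow> real \<Rightarrow> real \<Rightarrow> real \<Rightarrow> real" where
  "rho_A V E green aG aR bG bR =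
     (\<Sum>v\<in>V. absorption_prob V E green aG aR bG bR V {v}) / real (card V)"

definition rho_B :: "'v set \<Rightarrow> ('v \<Rightarrow> 'v \<Rightarrow> bool) \<Rightarrow> ('v \<Rightarrow> bool) \<Rightarrow> real \<Rightarrow> real \<Rightarrow> real \<Rightarrow> real \<Rightarrow> real" where
  "rho_B V E green aG aR bG bR =
     (\<Sum>v\<in>V. absorption_prob V E green aG aR bG bR {} (V - {v})) / real (card V)"

end

theory Submission
  imports Defs
begin

text \<open>
  The fixation probability \<open>p(S)\<close> of the all-\<open>A\<close> state is the unique function on states that
  is harmonic for the transition operator of the process and takes the boundary values
  \<open>p(\<emptyset>) = 0\<close>, \<open>p(V) = 1\<close>; uniqueness follows from a maximum principle that uses connectivity.
  On a properly two-coloured graph with colour-regular degrees the product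
  \<open>\<phi>(S) = \<Prod>v\<in>S. \<zeta>(v)\<close>, with \<open>\<zeta>\<close> equal to \<open>\<zeta>\<^sub>G\<close> on green and \<open>\<zeta>\<^sub>R\<close> on red vertices, is also
  harmonic: across each edge the drift caused by the two possible reproduction events cancels.
  Hence \<open>p(S) = (1 - \<phi>(S)) / (1 - \<phi>(V))\<close>, and averaging over singletons gives \<open>\<rho>\<^sub>A\<close>.
  The formula for \<open>\<rho>\<^sub>B\<close> follows by exchanging the roles of the two types.
\<close>

lemma zeta_balance_identity:
  fixes aG aR bG bR kG kR X Y :: real
  assumes "aG > 0" "aR > 0" "kG > 0" "kR > 0" "X > 0" "Y > 0"
    and "X = aR * kG + bG * kR" "Y = aG * kR + bR * kG"
  shows "aG / kG * (bR * X / (aR * Y)) * (bG * Y / (aG * X) - 1) + bR / kR * (1 - bR * X / (aR * Y)) = 0"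
  using assms(1-6) by (simp add: field_simps) (simp only: assms(7,8), algebra)

lemma rtranclp_edge_leaving_set:
  "E\<^sup>*\<^sup>* s t \<Longrightarrow> s \<in> S \<Longrightarrow> t \<notin> S \<Longrightarrow> \<exists>u v. E u v \<and> u \<in> S \<and> v \<notin> S"
  by (induction rule: rtranclp_induct) auto

lemma sum_nbrs_antisym_eq_0:
  assumes "finite V" and E_sym: "\<And>u v. E u v \<Longrightarrow> E v u"
    and antisym: "\<And>u v. E u v \<Longrightarrow> g u v + g v u = 0"
  shows "(\<Sum>u\<in>V. \<Sum>v\<in>nbrs V E u. g u v) = (0 :: real)"
proof -
  define h where "h u v = (if E u v then g u v else 0)" for u v
  have h_antisym: "h u v + h v u = 0" for u v
    using antisym E_sym by (cases "E u v") (auto simp: h_def)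
  have sum_h: "(\<Sum>u\<in>V. \<Sum>v\<in>nbrs V E u. g u v) = (\<Sum>u\<in>V. \<Sum>v\<in>V. h u v)"
    unfolding nbrs_def h_def by (simp add: sum.inter_filter \<open>finite V\<close>)
  have "2 * (\<Sum>u\<in>V. \<Sum>v\<in>V. h u v) = (\<Sum>u\<in>V. \<Sum>v\<in>V. h u v) + (\<Sum>u\<in>V. \<Sum>v\<in>V. h v u)"
    using sum.swap[of h V V] by simp
  also have "\<dots> = 0"
    using h_antisym by (simp flip: sum.distrib)
  finally show ?thesis using sum_h by simp
qed

subsection \<open>Exchanging the two types\<close>

lemma fitness_swap:
  "u \<in> V \<Longrightarrow> fitness green bG bR aG aR (V - S) u = fitness green aG aR bG bR S u"
  by (simp add: fitness_def)

lemma total_fitness_swap: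
  "total_fitness V green bG bR aG aR (V - S) = total_fitness V green aG aR bG bR S"
  unfolding total_fitness_def by (intro sum.cong) (simp_all add: fitness_swap)

lemma moran_update_Diff:
  "u \<in> V \<Longrightarrow> v \<in> V \<Longrightarrow> moran_update (V - S) u v = V - moran_update S u v"
  by (auto simp: moran_update_def)

lemma absorbed_by_swap:
  assumes "T \<subseteq> V" "S \<subseteq> V"
  shows "absorbed_by V E green bG bR aG aR (V - T) n (V - S) = absorbed_by V E green aG aR bG bR T n S"
  using assms(2)
proof (induction n arbitrary: S)
  case 0
  have "V - S = V - T \<longleftrightarrow> S = T" using 0 assms(1) by blast
  then show ?case by simp
next
  case (Suc n)
  have same_target: "V - S = V - T \<longleftrightarrow> S = T" using Suc.prems assms(1) by blast
  have IH: "absorbed_by V E green bG bR aG aR (V - T) n (moran_update (V - S) u v)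
      = absorbed_by V E green aG aR bG bR T n (moran_update S u v)" if "u \<in> V" "v \<in> nbrs V E u" for u v
  proof -
    have "v \<in> V" "moran_update S u v \<subseteq> V"
      using that Suc.prems by (auto simp: nbrs_def moran_update_def)
    then show ?thesis using Suc.IH moran_update_Diff[OF that(1)] by simp
  qed
  show ?case
    unfolding absorbed_by.simps same_target
    by (intro if_cong refl sum.cong) (simp_all add: IH fitness_swap total_fitness_swap)
qed

lemma rho_B_eq_rho_A_swap: "rho_B V E green aG aR bG bR = rho_A V E green bG bR aG aR"
proof -
  have "absorption_prob V E green aG aR bG bR {} (V - {v}) = absorption_prob V E green bG bR aG aR V {v}"
    if "v \<in> V" for v
    using absorbed_by_swap[of V V "{v}" E green aG aR bG bR] that
    by (simp add: absorption_prob_def)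
  then show ?thesis unfolding rho_A_def rho_B_def by simp
qed

subsection \<open>Harmonic functions of the Moran process\<close>

locale moran_process =
  fixes V :: "'v set" and E :: "'v \<Rightarrow> 'v \<Rightarrow> bool" and green :: "'v \<Rightarrow> bool"
    and aG aR bG bR :: real
  assumes finV: "finite V" and Vne: "V \<noteq> {}"
    and E_in_V: "\<And>u v. E u v \<Longrightarrow> u \<in> V \<and> v \<in> V"
    and connected: "\<forall>u\<in>V. \<forall>v\<in>V. E\<^sup>*\<^sup>* u v"
    and nbrs_nonempty: "\<And>u. u \<in> V \<Longrightarrow> nbrs V E u \<noteq> {}"
    and aG: "aG > 0" and aR: "aR > 0" and bG: "bG > 0" and bR: "bR > 0"
begin

definition step_prob :: "'v set \<Rightarrow> 'v \<Rightarrow> real" where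
  "step_prob S u = fitness green aG aR bG bR S u / total_fitness V green aG aR bG bR S
                   / real (card (nbrs V E u))"

definition expect_next :: "('v set \<Rightarrow> real) \<Rightarrow> 'v set \<Rightarrow> real" where
  "expect_next g S = (\<Sum>u\<in>V. \<Sum>v\<in>nbrs V E u. step_prob S u * g (moran_update S u v))"

definition harmonic :: "('v set \<Rightarrow> real) \<Rightarrow> bool" where
  "harmonic g \<longleftrightarrow> (\<forall>S\<subseteq>V. expect_next g S = g S)"

lemma finite_nbrs: "finite (nbrs V E u)"
  using finV by (simp add: nbrs_def)

lemma card_nbrs_pos: "u \<in> V \<Longrightarrow> card (nbrs V E u) > 0"
  using nbrs_nonempty finite_nbrs by (simp add: card_gt_0_iff)

lemma fitness_pos: "fitness green aG aR bG bR S u > 0"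
  using aG aR bG bR by (simp add: fitness_def)

lemma total_fitness_pos: "total_fitness V green aG aR bG bR S > 0"
  unfolding total_fitness_def using finV Vne fitness_pos by (intro sum_pos) auto

lemma step_prob_pos: "u \<in> V \<Longrightarrow> step_prob S u > 0"
  using fitness_pos total_fitness_pos card_nbrs_pos by (simp add: step_prob_def)

lemma step_prob_nonneg: "step_prob S u \<ge> 0"
  using fitness_pos[of S u] total_fitness_pos[of S] by (simp add: step_prob_def)

lemma sum_step_prob: "(\<Sum>u\<in>V. \<Sum>v\<in>nbrs V E u. step_prob S u) = 1"
proof -
  have "(\<Sum>u\<in>V. \<Sum>v\<in>nbrs V E u. step_prob S u)
      = (\<Sum>u\<in>V. fitness green aG aR bG bR S u / total_fitness V green aG aR bG bR S)"
    using card_nbrs_pos by (intro sum.cong) (simp_all add: step_prob_def)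
  also have "\<dots> = 1"
    using total_fitness_pos[of S] by (simp add: total_fitness_def flip: sum_divide_distrib)
  finally show ?thesis .
qed

lemma moran_update_subset: "S \<subseteq> V \<Longrightarrow> v \<in> nbrs V E u \<Longrightarrow> moran_update S u v \<subseteq> V"
  by (auto simp: moran_update_def nbrs_def)

lemma expect_next_diff: "expect_next (\<lambda>S. f S - g S) S = expect_next f S - expect_next g S"
  by (simp add: expect_next_def algebra_simps sum_subtractf)

lemma expect_next_cmult: "expect_next (\<lambda>S. c * f S) S = c * expect_next f S"
  by (simp add: expect_next_def sum_distrib_left algebra_simps)

lemma expect_next_const: "expect_next (\<lambda>_. c) S = c"
proof -
  have "expect_next (\<lambda>_. c) S = (\<Sum>u\<in>V. \<Sum>v\<in>nbrs V E u. step_prob S u) * c"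
    unfolding expect_next_def sum_distrib_right ..
  then show ?thesis using sum_step_prob by simp
qed

lemma harmonic_diff: "harmonic f \<Longrightarrow> harmonic g \<Longrightarrow> harmonic (\<lambda>S. f S - g S)"
  by (simp add: harmonic_def expect_next_diff)

lemma harmonic_cmult: "harmonic f \<Longrightarrow> harmonic (\<lambda>S. c * f S)"
  by (simp add: harmonic_def expect_next_cmult)

lemma harmonic_const: "harmonic (\<lambda>_. c)"
  by (simp add: harmonic_def expect_next_const)

text \<open>At a maximum, \<open>h\<close> is an average of values that are all at most the maximum, with
  positive weights; so every successor state attains the maximum as well.\<close>
lemma harmonic_max_successor:
  assumes h: "harmonic h" and T: "T \<subseteq> V" and max: "\<forall>S\<subseteq>V. h S \<le> h T"
    and u: "u \<in> V" and v: "v \<in> nbrs V E u"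
  shows "h (moran_update T u v) = h T"
proof -
  define g where "g u' v' = step_prob T u' * (h T - h (moran_update T u' v'))" for u' v'
  have g_nonneg: "g u' v' \<ge> 0" if "v' \<in> nbrs V E u'" for u' v'
    using step_prob_nonneg max moran_update_subset[OF T that] by (simp add: g_def)
  have "(\<Sum>u'\<in>V. \<Sum>v'\<in>nbrs V E u'. g u' v') = expect_next (\<lambda>S. h T - h S) T"
    by (simp add: expect_next_def g_def)
  also have "\<dots> = 0"
    using h T by (simp add: expect_next_diff expect_next_const harmonic_def)
  finally have "(\<Sum>u'\<in>V. \<Sum>v'\<in>nbrs V E u'. g u' v') = 0" .
  then have "(\<Sum>v'\<in>nbrs V E u. g u v') = 0"
    using u finV g_nonneg by (subst (asm) sum_nonneg_eq_0_iff) (auto intro: sum_nonneg)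
  then have "g u v = 0"
    using v finite_nbrs g_nonneg by (subst (asm) sum_nonneg_eq_0_iff) auto
  then show ?thesis
    using step_prob_pos[OF u, of T] by (simp add: g_def)
qed

lemma harmonic_le_0:
  assumes h: "harmonic h" and hV: "h V \<le> 0" and h0: "h {} \<le> 0" and S: "S \<subseteq> V"
  shows "h S \<le> 0"
proof -
  define M where "M = Max (h ` Pow V)"
  have h_le_M: "h T \<le> M" if "T \<subseteq> V" for T
    using finV that unfolding M_def by (intro Max_ge) auto
  have "M \<le> 0" if "T \<subseteq> V" "h T = M" for T
    using that
  proof (induction "card (V - T)" arbitrary: T rule: less_induct)
    case less
    show ?case
    proof (cases "T = V \<or> T = {}")
      case True
      then show ?thesis using less.prems hV h0 by auto
    next
      case False
      then obtain s t where st: "s \<in> T" "t \<in> V" "t \<notin> T" using less.prems(1) by auto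
      then have "E\<^sup>*\<^sup>* s t" using connected less.prems(1) by blast
      then obtain u v where uv: "E u v" "u \<in> T" "v \<notin> T"
        using rtranclp_edge_leaving_set st by metis
      have v: "v \<in> nbrs V E u" and "u \<in> V" "v \<in> V" using E_in_V[OF uv(1)] uv by (auto simp: nbrs_def)
      then have "h (insert v T) = M"
        using harmonic_max_successor[OF h less.prems(1) _ \<open>u \<in> V\<close> v] h_le_M less.prems uv(2)
        by (simp add: moran_update_def)
      moreover have "card (V - insert v T) < card (V - T)"
        using finV \<open>v \<in> V\<close> uv(3) by (intro psubset_card_mono) auto
      ultimately show ?thesis using less.hyps \<open>v \<in> V\<close> less.prems(1) by blast
    qed
  qed
  moreover have "M \<in> h ` Pow V" using finV unfolding M_def by (intro Max_in) auto
  ultimately have "M \<le> 0" by blast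
  then show ?thesis using h_le_M[OF S] by simp
qed

lemma harmonic_eq_0:
  assumes h: "harmonic h" and "h V = 0" "h {} = 0" "S \<subseteq> V"
  shows "h S = 0"
proof -
  have "h S \<le> 0"
    by (rule harmonic_le_0[OF h]) (use assms in simp_all)
  moreover have "-1 * h S \<le> 0"
    by (rule harmonic_le_0[OF harmonic_cmult[OF h, of "-1"]]) (use assms in simp_all)
  ultimately show ?thesis by simp
qed

abbreviation absorbed :: "'v set \<Rightarrow> nat \<Rightarrow> 'v set \<Rightarrow> real" where
  "absorbed T n S \<equiv> absorbed_by V E green aG aR bG bR T n S"

abbreviation fix_prob :: "'v set \<Rightarrow> real" where
  "fix_prob S \<equiv> absorption_prob V E green aG aR bG bR V S"

lemma absorbed_Suc: "absorbed T (Suc n) S = (if S = T then 1 else expect_next (absorbed T n) S)"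
  by (simp add: expect_next_def step_prob_def)

lemma absorbed_bounds: "S \<subseteq> V \<Longrightarrow> 0 \<le> absorbed T n S \<and> absorbed T n S \<le> 1"
proof (induction n arbitrary: S)
  case 0
  then show ?case by simp
next
  case (Suc n)
  have bounds: "0 \<le> absorbed T n (moran_update S u v) \<and> absorbed T n (moran_update S u v) \<le> 1"
    if "v \<in> nbrs V E u" for u v
    using Suc.IH[OF moran_update_subset[OF Suc.prems that]] .
  have "expect_next (absorbed T n) S \<ge> 0" unfolding expect_next_def
    by (intro sum_nonneg mult_nonneg_nonneg step_prob_nonneg) (use bounds in blast)
  moreover have "expect_next (absorbed T n) S \<le> (\<Sum>u\<in>V. \<Sum>v\<in>nbrs V E u. step_prob S u)"
    unfolding expect_next_def
    by (intro sum_mono mult_right_le_one_le step_prob_nonneg) (use bounds in blast)+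
  ultimately show ?case
    using sum_step_prob by (simp add: absorbed_Suc del: absorbed_by.simps(2))
qed

lemma absorbed_mono: "S \<subseteq> V \<Longrightarrow> absorbed T n S \<le> absorbed T (Suc n) S"
proof (induction n arbitrary: S)
  case 0
  have "expect_next (absorbed T 0) S \<ge> 0" unfolding expect_next_def
    by (intro sum_nonneg mult_nonneg_nonneg step_prob_nonneg) simp
  then show ?case by (simp add: absorbed_Suc del: absorbed_by.simps(2))
next
  case (Suc n)
  have "expect_next (absorbed T n) S \<le> expect_next (absorbed T (Suc n)) S"
    unfolding expect_next_def
    using Suc.IH moran_update_subset[OF Suc.prems]
    by (intro sum_mono mult_left_mono step_prob_nonneg) blast+
  then show ?case using absorbed_Suc[of T "Suc n" S] absorbed_Suc[of T n S] by simp
qed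

lemma absorbed_tendsto_fix_prob: "S \<subseteq> V \<Longrightarrow> (\<lambda>n. absorbed V n S) \<longlonglongrightarrow> fix_prob S"
proof -
  assume S: "S \<subseteq> V"
  have "incseq (\<lambda>n. absorbed V n S)" using absorbed_mono[OF S] by (intro incseq_SucI) auto
  moreover have "\<forall>n. absorbed V n S \<le> 1" using absorbed_bounds[OF S] by blast
  ultimately obtain L where L: "(\<lambda>n. absorbed V n S) \<longlonglongrightarrow> L"
    using incseq_convergent[of _ 1] by blast
  then show ?thesis using limI[OF L] by (simp add: absorption_prob_def)
qed

lemma moran_update_absorbing: "T = V \<or> T = {} \<Longrightarrow> v \<in> nbrs V E u \<Longrightarrow> moran_update T u v = T"
  using E_in_V by (auto simp: moran_update_def nbrs_def)

lemma expect_next_absorbing: "T = V \<or> T = {} \<Longrightarrow> expect_next g T = g T"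
  using expect_next_const[of "g T" T]
  by (simp add: expect_next_def moran_update_absorbing cong: sum.cong)

lemma fix_prob_V: "fix_prob V = 1"
proof -
  have "(\<lambda>n. absorbed V n V) = (\<lambda>n. 1)" by (rule ext, case_tac n) auto
  then show ?thesis unfolding absorption_prob_def by simp
qed

lemma fix_prob_empty: "fix_prob {} = 0"
proof -
  have "absorbed V n {} = 0" for n
    using Vne expect_next_absorbing[of "{}"]
    by (induction n) (simp_all add: absorbed_Suc del: absorbed_by.simps(2))
  then show ?thesis unfolding absorption_prob_def by simp
qed

lemma harmonic_fix_prob: "harmonic fix_prob"
  unfolding harmonic_def
proof (intro allI impI)
  fix S assume S: "S \<subseteq> V"
  show "expect_next fix_prob S = fix_prob S"
  proof (cases "S = V")
    case True
    then show ?thesis using expect_next_absorbing by simp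
  next
    case False
    have "(\<lambda>n. expect_next (absorbed V n) S) \<longlonglongrightarrow> expect_next fix_prob S"
      unfolding expect_next_def
      using absorbed_tendsto_fix_prob moran_update_subset[OF S]
      by (intro tendsto_sum tendsto_mult_left) blast
    moreover have "(\<lambda>n. expect_next (absorbed V n) S) = (\<lambda>n. absorbed V (Suc n) S)"
      using False by (simp add: absorbed_Suc del: absorbed_by.simps(2))
    ultimately show ?thesis
      using LIMSEQ_Suc[OF absorbed_tendsto_fix_prob[OF S]] LIMSEQ_unique by metis
  qed
qed

lemma harmonic_eq_fix_prob:
  assumes f: "harmonic f" and S: "S \<subseteq> V"
  shows "f S = f {} + (f V - f {}) * fix_prob S"
proof -
  have h: "harmonic (\<lambda>S. f S - f {} - (f V - f {}) * fix_prob S)"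
    by (intro harmonic_diff harmonic_cmult harmonic_const f harmonic_fix_prob)
  have "f S - f {} - (f V - f {}) * fix_prob S = 0"
    by (rule harmonic_eq_0[OF h _ _ S]) (simp_all add: fix_prob_V fix_prob_empty)
  then show ?thesis by simp
qed

end

subsection \<open>Properly two-coloured, colour-regular graphs\<close>

locale colour_regular_moran = moran_process +
  fixes kG kR :: nat
  assumes E_sym: "\<And>u v. E u v \<Longrightarrow> E v u"
    and proper: "\<And>u v. E u v \<Longrightarrow> green u \<noteq> green v"
    and deg_G: "\<And>u. u \<in> V \<Longrightarrow> green u \<Longrightarrow> card (nbrs V E u) = kG"
    and deg_R: "\<And>u. u \<in> V \<Longrightarrow> \<not> green u \<Longrightarrow> card (nbrs V E u) = kR"
    and neq: "aG * aR \<noteq> bG * bR"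
begin

definition zetaG :: real where
  "zetaG = bR * (aR * kG + bG * kR) / (aR * (aG * kR + bR * kG))"

definition zetaR :: real where
  "zetaR = bG * (aG * kR + bR * kG) / (aG * (aR * kG + bG * kR))"

definition zeta where
  "zeta v = (if green v then zetaG else zetaR)"

definition phi where
  "phi S = (\<Prod>v\<in>S. zeta v)"

lemma both_colours: "\<exists>g\<in>V. green g" "\<exists>r\<in>V. \<not> green r"
proof -
  obtain x where x: "x \<in> V" using Vne by auto
  then obtain y where "E x y" using nbrs_nonempty[OF x] by (auto simp: nbrs_def)
  then have "y \<in> V" "green x \<noteq> green y" using E_in_V proper by auto
  then show "\<exists>g\<in>V. green g" "\<exists>r\<in>V. \<not> green r" using x by (cases "green x"; auto)+
qed

lemma kG_pos: "kG > 0" and kR_pos: "kR > 0"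
  using both_colours card_nbrs_pos deg_G deg_R by fastforce+

lemma zetaG_mult_zetaR_ne_1: "zetaG * zetaR \<noteq> 1"
proof -
  define X Y where "X = aR * kG + bG * kR" and "Y = aG * kR + bR * kG"
  have "X > 0" "Y > 0"
    using aG aR bG bR kG_pos kR_pos by (simp_all add: X_def Y_def add_pos_pos)
  then have "zetaG * zetaR = (bR * bG) / (aR * aG)"
    using aG aR by (simp add: zetaG_def zetaR_def flip: X_def Y_def)
  then show ?thesis using neq aG aR by (auto simp: field_simps)
qed

text \<open>Its two instances, for \<open>u\<close> green and for \<open>u\<close> red, are the equations that determine
  \<open>\<zeta>\<^sub>G\<close> and \<open>\<zeta>\<^sub>R\<close>: they make the drift of \<open>phi\<close> across an edge vanish.\<close>
lemma zeta_balance: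
  assumes "E u v"
  shows "(if green u then aG else aR) / card (nbrs V E u) * zeta u * (zeta v - 1)
       + (if green v then bG else bR) / card (nbrs V E v) * (1 - zeta u) = 0"
proof -
  have uv: "u \<in> V" "v \<in> V" "green v \<longleftrightarrow> \<not> green u" using E_in_V proper assms by auto
  have X: "aR * kG + bG * kR > 0" and Y: "aG * kR + bR * kG > 0"
    using aG aR bG bR kG_pos kR_pos by (simp_all add: add_pos_pos)
  show ?thesis
  proof (cases "green u")
    case True
    then show ?thesis
      using uv deg_G deg_R kG_pos kR_pos
        zeta_balance_identity[OF aG aR _ _ X Y refl refl]
      by (simp add: zeta_def zetaG_def zetaR_def)
  next
    case False
    then show ?thesis
      using uv deg_G deg_R kG_pos kR_pos
        zeta_balance_identity[OF aR aG _ _ Y X refl refl]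
      by (simp add: zeta_def zetaG_def zetaR_def)
  qed
qed

lemma phi_insert: "finite S \<Longrightarrow> v \<notin> S \<Longrightarrow> phi (insert v S) = zeta v * phi S"
  by (simp add: phi_def)

lemma phi_edge_drift_cancel:
  assumes S: "S \<subseteq> V" and e: "E u v" and u: "u \<in> S" and v: "v \<notin> S"
  shows "step_prob S u * (phi (insert v S) - phi S) + step_prob S v * (phi (S - {u}) - phi S) = 0"
proof -
  define p where "p = phi (S - {u})"
  define F where "F = total_fitness V green aG aR bG bR S"
  have fin: "finite S" using S finV finite_subset by blast
  have phi_S: "phi S = zeta u * p"
    using phi_insert[of "S - {u}" u] fin u by (simp add: p_def insert_absorb)
  have degs: "card (nbrs V E u) > 0" "card (nbrs V E v) > 0"
    using E_in_V[OF e] card_nbrs_pos by auto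
  have "F > 0" using total_fitness_pos by (simp add: F_def)
  have "step_prob S u * (phi (insert v S) - phi S) + step_prob S v * (phi (S - {u}) - phi S)
      = p / F * ((if green u then aG else aR) / card (nbrs V E u) * zeta u * (zeta v - 1)
                 + (if green v then bG else bR) / card (nbrs V E v) * (1 - zeta u))"
    using degs \<open>F > 0\<close> u v
    by (simp add: phi_insert[OF fin v] phi_S step_prob_def fitness_def F_def p_def field_simps)
  then show ?thesis using zeta_balance[OF e] by simp
qed

lemma harmonic_phi: "harmonic phi"
  unfolding harmonic_def
proof (intro allI impI)
  fix S assume S: "S \<subseteq> V"
  define drift where "drift u v = step_prob S u * (phi (moran_update S u v) - phi S)" for u v
  have drift_antisym: "drift u v + drift v u = 0" if e: "E u v" for u v
  proof -
    consider "u \<in> S \<longleftrightarrow> v \<in> S" | "u \<in> S" "v \<notin> S" | "u \<notin> S" "v \<in> S" by blast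
    then show ?thesis
    proof cases
      case 1
      then show ?thesis by (auto simp: drift_def moran_update_def insert_absorb)
    next
      case 2
      then show ?thesis
        using phi_edge_drift_cancel[OF S e] by (simp add: drift_def moran_update_def)
    next
      case 3
      then show ?thesis
        using phi_edge_drift_cancel[OF S E_sym[OF e]] by (simp add: drift_def moran_update_def)
    qed
  qed
  have "(\<Sum>u\<in>V. \<Sum>v\<in>nbrs V E u. drift u v) = 0"
    using finV E_sym drift_antisym by (rule sum_nbrs_antisym_eq_0[of V E])
  moreover have "(\<Sum>u\<in>V. \<Sum>v\<in>nbrs V E u. drift u v) = expect_next phi S - phi S"
    using expect_next_diff[of phi "\<lambda>_. phi S" S] expect_next_const[of "phi S" S]
    by (simp add: expect_next_def drift_def algebra_simps)
  ultimately show "expect_next phi S = phi S" by simp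
qed

lemma phi_V_ne_1: "phi V \<noteq> 1"
proof
  assume "phi V = 1"
  then have "phi S = 1" if "S \<subseteq> V" for S
    using harmonic_eq_fix_prob[OF harmonic_phi that] by (simp add: phi_def)
  moreover obtain g r where "g \<in> V" "green g" "r \<in> V" "\<not> green r" using both_colours by blast
  ultimately have "phi {g} = 1" "phi {r} = 1" by simp_all
  then have "zetaG = 1" "zetaR = 1" using \<open>green g\<close> \<open>\<not> green r\<close> by (simp_all add: phi_def zeta_def)
  then show False using zetaG_mult_zetaR_ne_1 by simp
qed

lemma fix_prob_eq: "S \<subseteq> V \<Longrightarrow> fix_prob S = (1 - phi S) / (1 - phi V)"
  using harmonic_eq_fix_prob[OF harmonic_phi] phi_V_ne_1 by (simp add: phi_def field_simps)

lemma sum_by_colour: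
  fixes x y :: real
  shows "(\<Sum>v\<in>V. if green v then x else y) = card {v \<in> V. green v} * x + card {v \<in> V. \<not> green v} * y"
  using finV by (simp add: sum.If_cases Int_def Collect_conj_eq[symmetric] conj_commute)

lemma phi_V: "phi V = zetaG ^ card {v \<in> V. green v} * zetaR ^ card {v \<in> V. \<not> green v}"
  using finV by (simp add: phi_def zeta_def prod.If_cases Int_def Collect_conj_eq[symmetric] conj_commute)

lemma rho_A_eq:
  defines "NG \<equiv> card {v \<in> V. green v}" and "NR \<equiv> card {v \<in> V. \<not> green v}"
  shows "rho_A V E green aG aR bG bR
           = (1 - (NG * zetaG + NR * zetaR) / (NG + NR)) / (1 - zetaG ^ NG * zetaR ^ NR)"
proof -
  have card_V: "real (card V) = NG + NR"
    using sum_by_colour[of 1 1] by (simp add: NG_def NR_def)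
  have "real (card V) > 0" using finV Vne by (simp add: card_gt_0_iff)
  then have N_pos: "real NG + real NR > 0" using card_V by simp
  have "(\<Sum>v\<in>V. fix_prob {v}) = (\<Sum>v\<in>V. (1 - zeta v) / (1 - phi V))"
    by (intro sum.cong) (simp_all add: fix_prob_eq phi_def)
  also have "\<dots> = (card V - (\<Sum>v\<in>V. zeta v)) / (1 - phi V)"
    by (simp add: sum_subtractf flip: sum_divide_distrib)
  also have "(\<Sum>v\<in>V. zeta v) = NG * zetaG + NR * zetaR"
    unfolding zeta_def NG_def NR_def by (rule sum_by_colour)
  finally have "rho_A V E green aG aR bG bR = (NG + NR - (NG * zetaG + NR * zetaR)) / (1 - phi V) / (NG + NR)"
    by (simp add: rho_A_def card_V)
  then show ?thesis
    using N_pos phi_V_ne_1 unfolding phi_V NG_def NR_def by (simp add: field_simps)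
qed

end

lemma rho_A_singleton: "rho_A {x} E green aG aR bG bR = 1"
proof -
  have "(\<lambda>n. absorbed_by {x} E green aG aR bG bR {x} n {x}) = (\<lambda>n. 1)"
    by (rule ext, case_tac n) auto
  then show ?thesis by (simp add: rho_A_def absorption_prob_def)
qed

lemma degenerate_zeta_ne_1:
  fixes a a' b b' :: real and k :: nat
  assumes "a > 0" "a' > 0" "b > 0" "b' > 0" "a * a' \<noteq> b * b'"
  shows "b' * (b * k) / (a' * (a * k)) \<noteq> 1"
  using assms by (cases "k = 0") (auto simp: field_simps)

lemma rho_A_formula:
  fixes V :: "'v set" and E :: "'v \<Rightarrow> 'v \<Rightarrow> bool" and green :: "'v \<Rightarrow> bool"
    and aG aR bG bR :: real and kG kR :: nat
  assumes finV: "finite V" and nonempty: "V \<noteq> {}"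
    and E_in_V: "\<And>u v. E u v \<Longrightarrow> u \<in> V \<and> v \<in> V"
    and E_sym: "\<And>u v. E u v \<Longrightarrow> E v u"
    and connected: "\<forall>u\<in>V. \<forall>v\<in>V. E\<^sup>*\<^sup>* u v"
    and proper: "\<And>u v. E u v \<Longrightarrow> green u \<noteq> green v"
    and deg_G: "\<And>u. u \<in> V \<Longrightarrow> green u \<Longrightarrow> card (nbrs V E u) = kG"
    and deg_R: "\<And>u. u \<in> V \<Longrightarrow> \<not> green u \<Longrightarrow> card (nbrs V E u) = kR"
    and pos: "aG > 0" "aR > 0" "bG > 0" "bR > 0"
    and neq: "aG * aR \<noteq> bG * bR"
  defines "NG \<equiv> card {v \<in> V. green v}" and "NR \<equiv> card {v \<in> V. \<not> green v}"
    and "\<zeta>G \<equiv> bR * (aR * kG + bG * kR) / (aR * (aG * kR + bR * kG))"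
    and "\<zeta>R \<equiv> bG * (aG * kR + bR * kG) / (aG * (aR * kG + bG * kR))"
  shows "rho_A V E green aG aR bG bR =
           (1 - (NG * \<zeta>G + NR * \<zeta>R) / (NG + NR)) / (1 - \<zeta>G ^ NG * \<zeta>R ^ NR)"
proof (cases "\<exists>x. V = {x}")
  case True
  then obtain x where V: "V = {x}" by blast
  text \<open>A proper colouring excludes loops, so the single vertex has degree 0.\<close>
  have no_nbrs: "card (nbrs V E x) = 0" using V proper by (auto simp: nbrs_def)
  show ?thesis
  proof (cases "green x")
    case True
    then have colour_classes: "{v \<in> V. green v} = {x}" "{v \<in> V. \<not> green v} = {}" using V by auto
    have "NG = 1" "NR = 0" unfolding NG_def NR_def colour_classes by simp_all
    moreover have "kG = 0" using V True deg_G[of x] no_nbrs by simp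
    moreover have "\<zeta>G \<noteq> 1" using degenerate_zeta_ne_1[OF pos neq] \<open>kG = 0\<close> by (simp add: \<zeta>G_def)
    ultimately show ?thesis using V rho_A_singleton by simp
  next
    case False
    then have colour_classes: "{v \<in> V. green v} = {}" "{v \<in> V. \<not> green v} = {x}" using V by auto
    have "NG = 0" "NR = 1" unfolding NG_def NR_def colour_classes by simp_all
    moreover have "kR = 0" using V False deg_R[of x] no_nbrs by simp
    moreover have "\<zeta>R \<noteq> 1"
      using degenerate_zeta_ne_1[OF pos(2,1,4,3)] neq \<open>kR = 0\<close> by (simp add: \<zeta>R_def mult.commute)
    ultimately show ?thesis using V rho_A_singleton by simp
  qed
next
  case False
  have "nbrs V E u \<noteq> {}" if u: "u \<in> V" for u
  proof -
    obtain w where w: "w \<in> V" "w \<noteq> u" using False u nonempty by blast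
    then have "E\<^sup>*\<^sup>* u w" using connected u by blast
    then obtain y where "E u y" using w(2) by (cases rule: converse_rtranclpE) auto
    then show ?thesis using E_in_V by (auto simp: nbrs_def)
  qed
  then interpret colour_regular_moran V E green aG aR bG bR kG kR
    using assms by unfold_locales auto
  show ?thesis
    using rho_A_eq unfolding zetaG_def zetaR_def NG_def NR_def \<zeta>G_def \<zeta>R_def .
qed

theorem theorem1:
  fixes V :: "'v set" and E :: "'v \<Rightarrow> 'v \<Rightarrow> bool" and green :: "'v \<Rightarrow> bool"
    and aG aR bG bR :: real and kG kR :: nat
  assumes finV: "finite V" and nonempty: "V \<noteq> {}"
    and E_in_V: "\<And>u v. E u v \<Longrightarrow> u \<in> V \<and> v \<in> V"
    and E_sym: "\<And>u v. E u v \<Longrightarrow> E v u"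
    and E_irrefl: "\<And>u. \<not> E u u"
    and connected: "\<forall>u\<in>V. \<forall>v\<in>V. E\<^sup>*\<^sup>* u v"
    and proper: "\<And>u v. E u v \<Longrightarrow> green u \<noteq> green v"
    and deg_G: "\<And>u. u \<in> V \<Longrightarrow> green u \<Longrightarrow> card (nbrs V E u) = kG"
    and deg_R: "\<And>u. u \<in> V \<Longrightarrow> \<not> green u \<Longrightarrow> card (nbrs V E u) = kR"
    and pos: "aG > 0" "aR > 0" "bG > 0" "bR > 0"
    and neq: "aG * aR \<noteq> bG * bR"
  defines "NG \<equiv> card {v \<in> V. green v}" and "NR \<equiv> card {v \<in> V. \<not> green v}"
    and "\<zeta>G \<equiv> bR * (aR * kG + bG * kR) / (aR * (aG * kR + bR * kG))"
    and "\<zeta>R \<equiv> bG * (aG * kR + bR * kG) / (aG * (aR * kG + bG * kR))"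
    and "\<eta>G \<equiv> aR * (bR * kG + aG * kR) / (bR * (bG * kR + aR * kG))"
    and "\<eta>R \<equiv> aG * (bG * kR + aR * kG) / (bG * (bR * kG + aG * kR))"
  shows "rho_A V E green aG aR bG bR =
           (1 - (NG * \<zeta>G + NR * \<zeta>R) / (NG + NR)) / (1 - \<zeta>G ^ NG * \<zeta>R ^ NR) \<and>
         rho_B V E green aG aR bG bR =
           (1 - (NG * \<eta>G + NR * \<eta>R) / (NG + NR)) / (1 - \<eta>G ^ NG * \<eta>R ^ NR)"
proof -
  have neq': "bG * bR \<noteq> aG * aR" using neq by simp
  show ?thesis
    using rho_A_formula[OF finV nonempty E_in_V E_sym connected proper deg_G deg_R pos neq]
      rho_A_formula[OF finV nonempty E_in_V E_sym connected proper deg_G deg_R pos(3,4,1,2) neq']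
    unfolding rho_B_eq_rho_A_swap NG_def NR_def \<zeta>G_def \<zeta>R_def \<eta>G_def \<eta>R_def
    by simp
qed

end
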